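(* Let $O$ be the closed disk of radius $R>0$ centered at the origin, let $c_1,\ldots,c_n\in\mathbb{R}^2$ be fixed pupil centers and $\rho_1,\ldots,\rho_n\ge0$ initial pupil radii, and let $\varepsilon>0$. Consider the following algorithm. Repeat: (1) for the current radii, form the disks $D_{ij}$ (center $c_i-c_j$, radius $\rho_i+\rho_j$), their Apollonius diagram, the cells $A_{ij}$ and the sets $V_{ij}$, and set $\alpha_{ij}=\max_{x\in V_{ij}}\delta_{ij}(x)$ (with $\alpha_{ij}=-\infty$ if $V_{ij}=\emptyset$); (2) compute an optimal solution $(\rho^*_1,\ldots,\rho^*_n)$ of the linear program: minimize $\sum_i\rho^*_i$ subject to $\rho^*_i+\rho^*_j\ge(\rho_i+\rho_j)+\alpha_{ij}$ for $i,j=1,\ldots,n$ and $\rho^*_i\ge0$; (3) set $err=\sum_i\rho_i-\sum_i\rho^*_i$ and replace $\rho_i$ by $\rho^*_i$ for all $i$; until $err<\varepsilon$, where the stopping test is not applied after the first iteration. Then this algorithm always terminates.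
   Context: $\delta_{ij}(x)=\|x-(c_i-c_j)\|-(\rho_i+\rho_j)$. For a family of disks $D_k$ with centers $c_k$ and radii $\rho_k$, the Apollonius cell of $D_k$ is $\{x\mid\delta_k(x)\le\delta_l(x)\text{ for all }l\}$ where $\delta_k(x)=\|x-c_k\|-\rho_k$; points lying in at least three cells are Apollonius vertices. $A_{ij}$ is the cell of $D_{ij}$ in the Apollonius diagram of $\{D_{ij}\}_{i,j=1}^n$, and $V_{ij}$ is the set of Apollonius vertices of $A_{ij}$ lying in $O$ together with the points of $\partial A_{ij}\cap\partial O$. *)

theory Defs
  imports "HOL-Analysis.Analysis"
begin

type_synonym disk = "(real^2) \<times> real"   (* (center, radius) *)

definition disk_dist :: "disk \<Rightarrow> real^2 \<Rightarrow> real" where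
  "disk_dist d x = norm (x - fst d) - snd d"

definition apo_cell :: "disk set \<Rightarrow> disk \<Rightarrow> (real^2) set" where
  "apo_cell F d = {x. \<forall>e\<in>F. disk_dist d x \<le> disk_dist e x}"

definition apo_vertices :: "disk set \<Rightarrow> (real^2) set" where
  "apo_vertices F = {x. card {d\<in>F. x \<in> apo_cell F d} \<ge> 3}"

definition Dij :: "(nat \<Rightarrow> real^2) \<Rightarrow> (nat \<Rightarrow> real) \<Rightarrow> nat \<Rightarrow> nat \<Rightarrow> disk" where
  "Dij c \<rho> i j = (c i - c j, \<rho> i + \<rho> j)"

definition Dfam :: "(nat \<Rightarrow> real^2) \<Rightarrow> (nat \<Rightarrow> real) \<Rightarrow> nat \<Rightarrow> disk set" where
  "Dfam c \<rho> n = {Dij c \<rho> i j | i j. i \<in> {1..n} \<and> j \<in> {1..n}}"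

definition Aij :: "(nat \<Rightarrow> real^2) \<Rightarrow> (nat \<Rightarrow> real) \<Rightarrow> nat \<Rightarrow> nat \<Rightarrow> nat \<Rightarrow> (real^2) set" where
  "Aij c \<rho> n i j = apo_cell (Dfam c \<rho> n) (Dij c \<rho> i j)"

definition Vij :: "real \<Rightarrow> (nat \<Rightarrow> real^2) \<Rightarrow> (nat \<Rightarrow> real) \<Rightarrow> nat \<Rightarrow> nat \<Rightarrow> nat \<Rightarrow> (real^2) set" where
  "Vij R c \<rho> n i j =
     (apo_vertices (Dfam c \<rho> n) \<inter> Aij c \<rho> n i j \<inter> cball 0 R)
     \<union> (frontier (Aij c \<rho> n i j) \<inter> frontier (cball (0::real^2) R))"

text \<open>alpha_ij = max of delta_ij over V_ij, and -infinity if V_ij is empty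
  (V_ij is compact, so the supremum is a maximum when V_ij is nonempty).\<close>
definition alpha :: "real \<Rightarrow> (nat \<Rightarrow> real^2) \<Rightarrow> (nat \<Rightarrow> real) \<Rightarrow> nat \<Rightarrow> nat \<Rightarrow> nat \<Rightarrow> ereal" where
  "alpha R c \<rho> n i j = Sup ((\<lambda>x. ereal (disk_dist (Dij c \<rho> i j) x)) ` Vij R c \<rho> n i j)"

definition lp_feasible :: "real \<Rightarrow> (nat \<Rightarrow> real^2) \<Rightarrow> nat \<Rightarrow> (nat \<Rightarrow> real) \<Rightarrow> (nat \<Rightarrow> real) \<Rightarrow> bool" where
  "lp_feasible R c n \<rho> \<rho>' \<longleftrightarrow>
     (\<forall>i\<in>{1..n}. \<rho>' i \<ge> 0) \<and>
     (\<forall>i\<in>{1..n}. \<forall>j\<in>{1..n}. ereal (\<rho>' i + \<rho>' j) \<ge> ereal (\<rho> i + \<rho> j) + alpha R c \<rho> n i j)"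

definition lp_optimal :: "real \<Rightarrow> (nat \<Rightarrow> real^2) \<Rightarrow> nat \<Rightarrow> (nat \<Rightarrow> real) \<Rightarrow> (nat \<Rightarrow> real) \<Rightarrow> bool" where
  "lp_optimal R c n \<rho> \<rho>' \<longleftrightarrow>
     lp_feasible R c n \<rho> \<rho>' \<and>
     (\<forall>\<sigma>. lp_feasible R c n \<rho> \<sigma> \<longrightarrow> (\<Sum>i\<in>{1..n}. \<rho>' i) \<le> (\<Sum>i\<in>{1..n}. \<sigma> i))"

end

theory Submission
  imports Defs
begin

text \<open>Every LP solution has nonnegative radii, so from the first iteration on the total radius
  is bounded below by 0. A real sequence bounded below cannot drop by at least \<open>\<epsilon> > 0\<close>
  at every step, so some iteration has \<open>err < \<epsilon>\<close>.\<close>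

lemma bounded_below_decrease_less:
  fixes S :: "nat \<Rightarrow> real"
  assumes "\<epsilon> > 0" and bounded: "\<And>k. k \<ge> m \<Longrightarrow> b \<le> S k"
  shows "\<exists>k\<ge>m. S k - S (Suc k) < \<epsilon>"
proof (rule ccontr)
  assume "\<not> ?thesis"
  then have drop: "S (Suc k) \<le> S k - \<epsilon>" if "k \<ge> m" for k
    using that by force
  have linear_drop: "S (m + j) \<le> S m - real j * \<epsilon>" for j
  proof (induction j)
    case 0
    then show ?case by simp
  next
    case (Suc j)
    then show ?case using drop[of "m + j"] by (simp add: algebra_simps)
  qed
  obtain j :: nat where "S m - b < real j * \<epsilon>"
    using reals_Archimedean3[OF \<open>\<epsilon> > 0\<close>] by blast
  with linear_drop[of j] bounded[of "m + j"] show False by simp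
qed

lemma lp_optimal_nonneg:
  assumes "lp_optimal R c n \<rho> \<rho>'" and "i \<in> {1..n}"
  shows "\<rho>' i \<ge> 0"
  using assms unfolding lp_optimal_def lp_feasible_def by blast

theorem lemma12:
  fixes R \<epsilon> :: real and n :: nat and c :: "nat \<Rightarrow> real^2"
    and \<rho>0 :: "nat \<Rightarrow> real" and r :: "nat \<Rightarrow> nat \<Rightarrow> real"
  assumes "R > 0" and "\<epsilon> > 0"
    and "\<forall>i\<in>{1..n}. \<rho>0 i \<ge> 0"
    and "r 0 = \<rho>0"
    and "\<forall>k. lp_optimal R c n (r k) (r (Suc k))"
  shows "\<exists>k\<ge>1. (\<Sum>i\<in>{1..n}. r k i) - (\<Sum>i\<in>{1..n}. r (Suc k) i) < \<epsilon>"
proof (rule bounded_below_decrease_less[OF \<open>\<epsilon> > 0\<close>])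
  fix k :: nat
  assume "k \<ge> 1"
  then have "k = Suc (k - 1)" by simp
  then have "\<forall>i\<in>{1..n}. r k i \<ge> 0"
    using assms(5) lp_optimal_nonneg by metis
  then show "0 \<le> (\<Sum>i\<in>{1..n}. r k i)" by (intro sum_nonneg) auto
qed

end
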